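(* Let $E$, $v$ and $f_T$ be as described in the context. Then, for $s\in(0,\frac{\alpha}{2})$, \begin{equation*} a_{ij}(x)\partial_{ij}(\Delta_e^sv(x))\geq F_s(x),\ \ \ \ \forall x\in\mathbb{R}^n,\ e\in E\setminus\{0\}, \end{equation*} where $a_{ij}(x)=cof_{ij}(D^2v(x))$ (the algebraic cofactor of the $(i,j)$ entry of $D^2v(x)$) and \begin{equation*} F_s(x):=n\left(\det(D^2v(x))^{\frac{n-1}{n}}\right)\left(\frac{f_T^{\frac{1}{n}}(x+e)+f_T^{\frac{1}{n}}(x-e)-2f_T^{\frac{1}{n}}(x)}{|e|^{2s}}\right). \end{equation*}
   Context: Setting: $\alpha\in(0,1)$; $f_p$ is a positive periodic function on $\mathbb{R}^n$ with $d_0^{-1}\leq f_p\leq d_0$, $[f_p]_{C^\alpha(\mathbb{R}^n)}\leq d_0$, and (after normalization) $f_p(x+e_i)=f_p(x)$ for the standard basis vectors $e_i$. $u$ is a convex solution of $\det(D^2u)=f$ in $\mathbb{R}^n$ (with $f$ a $C^\alpha$ perturbation of $f_p$ decaying at infinity), which after modification on a compact set is assumed $C^{2,\alpha}_{loc}(\mathbb{R}^n)$ with $f\in C^\alpha(\mathbb{R}^n)$. $T$ is a linear transform with $\det T=1$ such that $|u(Tx)-\frac12|x|^2|\leq c_0|x|^{2-\theta}$ for $|x|\geq1$. Set $v=u\circ T$, $f_T(x)=f(T(x))$, $(f_p)_T(x)=f_p(T(x))$, so that $\det(D^2v)=f_T$ in $\mathbb{R}^n$ and $v\in C^2$ with $c_1I\leq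 D^2v\leq c_2I$ for positive constants $c_1,c_2$. Let $p_i:=T^{-1}e_i$, so $(f_p)_T(x+p_i)=(f_p)_T(x)$, and $E:=\{k_1p_1+\cdots+k_np_n:\ k_1,\dots,k_n\in\mathbb{Z}\}$. For $e\in\mathbb{R}^n\setminus\{0\}$ and $s\in(0,1)$, the $2s$-order increment is $\Delta_e^sv(x):=\frac{v(x+e)+v(x-e)-2v(x)}{|e|^{2s}}$. Summation over repeated indices $i,j$ is implied. *)

theory Defs
  imports "HOL-Analysis.Analysis"
begin

definition partial :: "'n::finite \<Rightarrow> (real^'n \<Rightarrow> real) \<Rightarrow> real^'n \<Rightarrow> real" where
  "partial i g x = deriv (\<lambda>t. g (x + t *\<^sub>R axis i 1)) 0"

definition hess :: "(real^'n::finite \<Rightarrow> real) \<Rightarrow> real^'n \<Rightarrow> real^'n^'n" where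
  "hess g x = (\<chi> i j. partial i (partial j g) x)"

definition C2 :: "(real^'n::finite \<Rightarrow> real) \<Rightarrow> bool" where
  "C2 g \<longleftrightarrow> (\<exists>Dg H. (\<forall>x. (g has_derivative (\<lambda>h. Dg x \<bullet> h)) (at x)) \<and>
                     (\<forall>x. (Dg has_derivative (\<lambda>h. H x *v h)) (at x)) \<and>
                     continuous_on UNIV H)"

text \<open>Algebraic cofactor of the (i,j) entry: (-1)^(i+j) times the (i,j) minor, which equals the
  determinant of A with its i-th row replaced by the j-th standard basis vector.\<close>
definition cofactor :: "real^'n^'n \<Rightarrow> 'n::finite \<Rightarrow> 'n \<Rightarrow> real" where
  "cofactor A i j = det (\<chi> k. if k = i then axis j 1 else A $ k)"

definition incr :: "real \<Rightarrow> real^'n::finite \<Rightarrow> (real^'n \<Rightarrow> real) \<Rightarrow> real^'n \<Rightarrow> real" where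
  "incr s e v x = (v (x + e) + v (x - e) - 2 * v x) / (norm e powr (2 * s))"

end

theory Submission
  imports Defs
begin

text \<open>Let A = D^2 v(x). Its cofactor matrix is det A * A^-1, so for positive definite B and R
  with R A R^T = I the pairing \<Sum> cof(A)_ij B_ij equals det A * tr(R B R^T). By Hadamard's
  inequality and AM-GM, tr C \<ge> n (det C)^(1/n) for positive definite C; hence
  \<Sum> cof(A)_ij B_ij \<ge> n (det A)^((n-1)/n) (det B)^(1/n), with equality for B = A (concavity of
  det^(1/n)). The Hessian of the increment of v is the second difference of D^2 v, so taking
  B = D^2 v(x + e) and B = D^2 v(x - e) gives the claim, since det D^2 v = f_T because det T = 1.\<close>

section \<open>Positive definite matrices\<close>

definition positive_definite :: "real^'n^'n \<Rightarrow> bool" where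
  "positive_definite C \<longleftrightarrow> transpose C = C \<and> (\<forall>x. x \<noteq> 0 \<longrightarrow> 0 < x \<bullet> (C *v x))"

lemma positive_definite_quadratic_pos:
  "positive_definite C \<Longrightarrow> x \<noteq> 0 \<Longrightarrow> 0 < x \<bullet> (C *v x)"
  by (simp add: positive_definite_def)

lemma inner_symmetric_matrix:
  fixes C :: "real^'n^'n"
  assumes "transpose C = C"
  shows "x \<bullet> (C *v y) = y \<bullet> (C *v x)"
  by (metis assms dot_lmul_matrix inner_commute vector_transpose_matrix)

lemma inner_axis_matrix_axis: "axis i 1 \<bullet> ((C::real^'n^'n) *v axis j 1) = C$i$j"
  by (simp add: matrix_vector_mult_basis inner_axis' column_def)

lemma matrix_mult_transpose_nth:
  "((X::real^'n^'n) ** C ** transpose X) $ i $ j = X$i \<bullet> (C *v X$j)"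
  by (simp add: matrix_matrix_mult_def matrix_vector_mult_def inner_vec_def transpose_def
      sum_distrib_left sum_distrib_right mult_ac) (rule sum.swap)

lemma det_eq_1_row_nonzero: "det (Q::real^'n^'n) = 1 \<Longrightarrow> Q$i \<noteq> 0"
  by (metis det_zero_row(1) row_def vec_lambda_eta zero_neq_one)

lemma conjugate_projection:
  fixes C :: "real^'n^'n" and w :: "real^'n"
  assumes sym: "transpose C = C" and S: "finite S"
    and orth: "\<And>i j. i \<in> S \<Longrightarrow> j \<in> S \<Longrightarrow> i \<noteq> j \<Longrightarrow> q i \<bullet> (C *v q j) = 0"
    and pos: "\<And>j. j \<in> S \<Longrightarrow> 0 < q j \<bullet> (C *v q j)"
  defines "p \<equiv> w - (\<Sum>j\<in>S. (w \<bullet> (C *v q j) / (q j \<bullet> (C *v q j))) *\<^sub>R q j)"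
  shows "\<And>k. k \<in> S \<Longrightarrow> p \<bullet> (C *v q k) = 0" and "p \<bullet> (C *v p) \<le> w \<bullet> (C *v w)"
proof -
  define c where "c j = w \<bullet> (C *v q j) / (q j \<bullet> (C *v q j))" for j
  have p: "p = w - (\<Sum>j\<in>S. c j *\<^sub>R q j)" by (simp add: p_def c_def)
  show orth_p: "p \<bullet> (C *v q k) = 0" if "k \<in> S" for k
  proof -
    have "(\<Sum>j\<in>S. c j *\<^sub>R q j) \<bullet> (C *v q k) = c k * (q k \<bullet> (C *v q k))"
      unfolding inner_sum_left using that S orth
      by (subst sum.remove[of S k]) (auto intro!: sum.neutral)
    also have "\<dots> = w \<bullet> (C *v q k)" using pos[OF that] by (simp add: c_def)
    finally show ?thesis by (simp add: p inner_diff_left)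
  qed
  have orth_p': "q k \<bullet> (C *v p) = 0" if "k \<in> S" for k
    using orth_p[OF that] inner_symmetric_matrix[OF sym] by metis
  have "p \<bullet> (C *v p) = w \<bullet> (C *v p)"
    using orth_p' by (simp add: p inner_diff_left inner_sum_left)
  also have "\<dots> = p \<bullet> (C *v w)" by (rule inner_symmetric_matrix[OF sym])
  also have "\<dots> = w \<bullet> (C *v w) - (\<Sum>j\<in>S. c j * c j * (q j \<bullet> (C *v q j)))"
    using pos by (auto simp: p c_def inner_diff_left inner_sum_left inner_symmetric_matrix[OF sym, of "q _" w]
        intro!: sum.cong)
  also have "\<dots> \<le> w \<bullet> (C *v w)"
    using pos by (simp add: sum_nonneg less_imp_le)
  finally show "p \<bullet> (C *v p) \<le> w \<bullet> (C *v w)" .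
qed

text \<open>Gram-Schmidt for the form x \<bullet> (C *v y): each step subtracts from a row a combination of
  the other rows, so the determinant stays 1, and the diagonal entries can only decrease.\<close>

lemma unimodular_conjugate_diagonalization:
  fixes C :: "real^'n^'n"
  assumes C: "positive_definite C"
  obtains Q :: "real^'n^'n" where "det Q = 1"
    and "\<And>i j. i \<noteq> j \<Longrightarrow> Q$i \<bullet> (C *v Q$j) = 0" and "\<And>i. Q$i \<bullet> (C *v Q$i) \<le> C$i$i"
proof -
  have sym: "transpose C = C"
    using C by (simp add: positive_definite_def)
  have "\<exists>q::'n \<Rightarrow> real^'n. (\<forall>i. i \<notin> S \<longrightarrow> q i = axis i 1)
          \<and> (\<forall>i\<in>S. \<forall>j\<in>S. i \<noteq> j \<longrightarrow> q i \<bullet> (C *v q j) = 0)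
          \<and> (\<forall>i. q i \<bullet> (C *v q i) \<le> C$i$i) \<and> det (\<chi> i. q i) = 1"
    if "finite S" for S
    using that
  proof (induction S rule: finite_induct)
    case empty
    have "(\<chi> i. axis i 1) = (mat 1 :: real^'n^'n)"
      by (simp add: vec_eq_iff axis_def mat_def)
    then show ?case
      by (intro exI[of _ "\<lambda>i. axis i 1"]) (simp add: inner_axis_matrix_axis)
  next
    case (insert a S)
    then obtain q where q_out: "\<forall>i. i \<notin> S \<longrightarrow> q i = axis i 1"
      and q_orth: "\<And>i j. i \<in> S \<Longrightarrow> j \<in> S \<Longrightarrow> i \<noteq> j \<Longrightarrow> q i \<bullet> (C *v q j) = 0"
      and q_le: "\<forall>i. q i \<bullet> (C *v q i) \<le> C$i$i" and q_det: "det (\<chi> i. q i) = 1"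
      by blast
    have q_pos: "0 < q j \<bullet> (C *v q j)" for j
      using det_eq_1_row_nonzero[OF q_det, of j] by (simp add: positive_definite_quadratic_pos[OF C])
    define p where "p = (\<Sum>j\<in>S. (axis a 1 \<bullet> (C *v q j) / (q j \<bullet> (C *v q j))) *\<^sub>R q j)"
    define q' where "q' = q(a := axis a 1 - p)"
    have qa: "q a = axis a 1" using q_out insert by auto
    note proj = conjugate_projection[where q = q and w = "axis a 1", OF sym insert(1) q_orth q_pos,
        folded p_def]
    have p_span: "- p \<in> vec.span {row j (\<chi> i. q i) |j. j \<noteq> a}"
      unfolding p_def scalar_mult_eq_scaleR[symmetric] using insert(2)
      by (intro vec.span_neg vec.span_sum vec.span_scale vec.span_base) (auto simp: row_def)
    have "(\<chi> i. q' i) = (\<chi> k. if k = a then row a (\<chi> i. q i) + - p else row k (\<chi> i. q i))"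
      by (simp add: vec_eq_iff row_def q'_def qa)
    then have "det (\<chi> i. q' i) = 1"
      using det_row_span[OF p_span] q_det by simp
    moreover have "\<forall>i\<in>insert a S. \<forall>j\<in>insert a S. i \<noteq> j \<longrightarrow> q' i \<bullet> (C *v q' j) = 0"
      using q_orth q_pos insert(2) proj(1) inner_symmetric_matrix[OF sym, of "axis a 1 - p"]
      by (auto simp: q'_def)
    moreover have "\<forall>i. q' i \<bullet> (C *v q' i) \<le> C$i$i"
      using q_le q_pos proj(2) by (auto simp: q'_def inner_axis_matrix_axis)
    ultimately show ?case using q_out by (intro exI[of _ q']) (auto simp: q'_def)
  qed
  from this[of UNIV] obtain q :: "'n \<Rightarrow> real^'n"
    where "\<forall>i j. i \<noteq> j \<longrightarrow> q i \<bullet> (C *v q j) = 0" "\<forall>i. q i \<bullet> (C *v q i) \<le> C$i$i"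
      and "det (\<chi> i. q i) = 1"
    by auto
  then show thesis by (intro that[of "\<chi> i. q i"]) auto
qed

lemma det_eq_prod_conjugate_diagonal:
  fixes C Q :: "real^'n^'n"
  assumes "det Q = 1" and "\<And>i j. i \<noteq> j \<Longrightarrow> Q$i \<bullet> (C *v Q$j) = 0"
  shows "det C = (\<Prod>i\<in>UNIV. Q$i \<bullet> (C *v Q$i))"
proof -
  have "det C = det (Q ** C ** transpose Q)" using assms(1) by (simp add: det_mul)
  also have "\<dots> = (\<Prod>i\<in>UNIV. Q$i \<bullet> (C *v Q$i))"
    by (subst det_diagonal) (use assms(2) in \<open>auto simp: matrix_mult_transpose_nth\<close>)
  finally show ?thesis .
qed

lemma positive_definite_diagonal_pos:
  "positive_definite C \<Longrightarrow> 0 < C$i$i"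
  using positive_definite_quadratic_pos[of C "axis i 1"] by (simp add: inner_axis_matrix_axis)

lemma positive_definite_det_pos:
  assumes C: "positive_definite C"
  shows "0 < det C"
proof -
  obtain Q where Q: "det Q = 1" "\<And>i j. i \<noteq> j \<Longrightarrow> Q$i \<bullet> (C *v Q$j) = 0"
    and "\<And>i. Q$i \<bullet> (C *v Q$i) \<le> C$i$i"
    using unimodular_conjugate_diagonalization[OF C] by blast
  have "0 < Q$i \<bullet> (C *v Q$i)" for i
    by (intro positive_definite_quadratic_pos[OF C] det_eq_1_row_nonzero[OF Q(1)])
  then show ?thesis by (simp add: det_eq_prod_conjugate_diagonal[OF Q] prod_pos)
qed

lemma hadamard_det_le:
  assumes C: "positive_definite C"
  shows "det C \<le> (\<Prod>i\<in>UNIV. C$i$i)"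
proof -
  obtain Q where Q: "det Q = 1" "\<And>i j. i \<noteq> j \<Longrightarrow> Q$i \<bullet> (C *v Q$j) = 0"
    and le: "\<And>i. Q$i \<bullet> (C *v Q$i) \<le> C$i$i"
    using unimodular_conjugate_diagonalization[OF C] by blast
  have "0 \<le> Q$i \<bullet> (C *v Q$i)" for i
    by (intro less_imp_le positive_definite_quadratic_pos[OF C] det_eq_1_row_nonzero[OF Q(1)])
  then show ?thesis by (simp add: det_eq_prod_conjugate_diagonal[OF Q] prod_mono le)
qed

lemma positive_definite_congruent_to_id:
  assumes C: "positive_definite C"
  obtains R :: "real^'n^'n" where "R ** C ** transpose R = mat 1"
proof -
  obtain Q where Q: "det Q = 1" "\<And>i j. i \<noteq> j \<Longrightarrow> Q$i \<bullet> (C *v Q$j) = 0"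
    and "\<And>i. Q$i \<bullet> (C *v Q$i) \<le> C$i$i"
    using unimodular_conjugate_diagonalization[OF C] by blast
  define d where "d i = Q$i \<bullet> (C *v Q$i)" for i
  have d: "0 < d i" for i
    unfolding d_def by (intro positive_definite_quadratic_pos[OF C] det_eq_1_row_nonzero[OF Q(1)])
  define R where "R = (\<chi> i. (1 / sqrt (d i)) *\<^sub>R Q$i)"
  have "(R ** C ** transpose R) $ i $ j = mat 1 $ i $ j" for i j
    using d[of i] Q(2)[of i j]
    by (auto simp: matrix_mult_transpose_nth R_def matrix_vector_mult_scaleR mat_def d_def
        real_sqrt_mult[symmetric])
  then show thesis by (intro that[of R]) (simp add: vec_eq_iff)
qed

lemma trace_ge_det_root:
  assumes C: "positive_definite C"
  shows "real CARD('n) * det C powr (1 / real CARD('n)) \<le> trace (C :: real^'n^'n)"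
proof -
  have "det C powr (1 / CARD('n)) \<le> (\<Prod>i\<in>UNIV. C$i$i) powr (1 / CARD('n))"
    using positive_definite_det_pos[OF C] hadamard_det_le[OF C] by (simp add: powr_mono2)
  also have "\<dots> \<le> (\<Sum>i\<in>UNIV. C$i$i / CARD('n))"
    using positive_definite_diagonal_pos[OF C] by (intro arith_geom_mean) (auto simp: less_imp_le)
  also have "\<dots> = trace C / CARD('n)"
    by (simp add: trace_def sum_divide_distrib)
  finally show ?thesis by (simp add: field_simps)
qed

lemma positive_definite_congruence:
  fixes B R :: "real^'n^'n"
  assumes B: "positive_definite B" and R: "det R \<noteq> 0"
  shows "positive_definite (R ** B ** transpose R)"
  unfolding positive_definite_def
proof (intro conjI allI impI)
  show "transpose (R ** B ** transpose R) = R ** B ** transpose R"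
    using B by (simp add: positive_definite_def matrix_transpose_mul matrix_mul_assoc)
  fix x :: "real^'n" assume "x \<noteq> 0"
  then have "transpose R *v x \<noteq> 0"
    using R by (metis det_transpose invertible_det_nz invertible_left_inverse
        matrix_vector_mul_assoc matrix_vector_mul_lid matrix_vector_mult_0_right)
  then have "0 < (transpose R *v x) \<bullet> (B *v (transpose R *v x))"
    using B by (simp add: positive_definite_def)
  then show "0 < x \<bullet> ((R ** B ** transpose R) *v x)"
    by (simp add: matrix_vector_mul_assoc[symmetric] dot_lmul_matrix[symmetric])
qed

lemma cofactor_row_expansion:
  "(\<Sum>j\<in>UNIV. cofactor A i j * w$j) = det (\<chi> k. if k = i then w else A$k)"
proof -
  have "det (\<chi> k. if k = i then w else A$k) =
        det (\<chi> k. if k = i then (\<Sum>j\<in>UNIV. (\<lambda>_ j. w$j *s axis j 1) k j) else A$k)"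
    by (simp only: basis_expansion)
  also have "\<dots> = (\<Sum>j\<in>UNIV. det (\<chi> k. if k = i then w$j *s axis j 1 else A$k))"
    by (rule det_linear_row_sum) simp
  also have "\<dots> = (\<Sum>j\<in>UNIV. w$j * cofactor A i j)"
    by (simp add: det_row_mul cofactor_def)
  finally show ?thesis by (simp add: mult.commute)
qed

lemma cofactor_matrix_mult_transpose:
  "(\<chi> i j. cofactor A i j) ** transpose A = mat (det A)"
proof -
  have "(\<Sum>j\<in>UNIV. cofactor A i j * A$k$j) = (if i = k then det A else 0)" for i k
  proof (cases "i = k")
    case True
    then have "(\<chi> l. if l = i then A$k else A$l) = A" by (simp add: vec_eq_iff)
    then show ?thesis using True by (simp add: cofactor_row_expansion)
  next
    case False
    have "det (\<chi> l. if l = i then A$k else A$l) = 0"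
      using False by (intro det_identical_rows[of i k]) (auto simp: row_def vec_eq_iff)
    then show ?thesis using False by (simp add: cofactor_row_expansion)
  qed
  then show ?thesis by (simp add: vec_eq_iff matrix_matrix_mult_def transpose_def mat_def)
qed

lemma scaleR_mat: "c *\<^sub>R mat 1 = (mat c :: real^'n^'n)"
  by (simp add: vec_eq_iff mat_def)

lemma trace_scaleR: "trace (c *\<^sub>R (A :: real^'n^'n)) = c * trace A"
  by (simp add: trace_def sum_distrib_left)

lemma cofactor_pairing_ge:
  fixes A B :: "real^'n^'n"
  assumes A: "positive_definite A" and B: "positive_definite B"
  shows "real CARD('n) * det A powr ((real CARD('n) - 1) / real CARD('n)) * det B powr (1 / real CARD('n))
         \<le> (\<Sum>i\<in>UNIV. \<Sum>j\<in>UNIV. cofactor A i j * B$i$j)"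
proof -
  define N where "N = real CARD('n)"
  define K where "K = (\<chi> i j. cofactor A i j)"
  obtain R :: "real^'n^'n" where R: "R ** A ** transpose R = mat 1"
    using positive_definite_congruent_to_id[OF A] by blast
  define C where "C = R ** B ** transpose R"
  have detA: "0 < det A" and detB: "0 < det B"
    using A B by (simp_all add: positive_definite_det_pos)
  have detR: "det A * (det R * det R) = 1"
    using arg_cong[OF R, of det] by (simp add: det_mul det_transpose mult_ac)
  then have detC: "det C = det B / det A"
    using detA by (simp add: C_def det_mul field_simps)
  have C: "positive_definite C"
    unfolding C_def using detR by (intro positive_definite_congruence[OF B]) auto
  have "(transpose R ** R) ** A = mat 1"
    using matrix_left_right_inverse1[OF R] by (simp only: matrix_mul_assoc)
  then have inv: "A ** (transpose R ** R) = mat 1"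
    by (rule matrix_left_right_inverse1)
  have "K = (K ** transpose A) ** (transpose R ** R)"
    using A by (simp only: positive_definite_def matrix_mul_assoc[symmetric] inv matrix_mul_rid)
  also have "\<dots> = det A *\<^sub>R (transpose R ** R)"
    unfolding K_def cofactor_matrix_mult_transpose scaleR_mat[symmetric, of "det A"]
    by (simp only: scalar_matrix_assoc[symmetric] matrix_mul_lid)
  finally have "trace (K ** transpose B) = det A * trace (transpose R ** (R ** B))"
    using B by (simp add: positive_definite_def scalar_matrix_assoc[symmetric] trace_scaleR
        matrix_mul_assoc)
  also have "\<dots> = det A * trace C"
    by (simp add: C_def trace_mul_sym[of "transpose R"])
  finally have pairing: "(\<Sum>i\<in>UNIV. \<Sum>j\<in>UNIV. cofactor A i j * B$i$j) = det A * trace C"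
    by (simp add: K_def trace_def matrix_matrix_mult_def transpose_def)
  have "N * det A powr ((N - 1) / N) * det B powr (1 / N) = det A * (N * det C powr (1 / N))"
    using detA detB by (simp add: detC powr_divide diff_divide_distrib powr_diff)
  also have "\<dots> \<le> det A * trace C"
    using trace_ge_det_root[OF C] detA by (simp add: N_def)
  finally show ?thesis by (simp add: pairing N_def)
qed

lemma cofactor_second_difference_ge:
  fixes A B1 B2 :: "real^'n^'n"
  assumes A: "positive_definite A" and B1: "positive_definite B1" and B2: "positive_definite B2"
  defines "N \<equiv> real CARD('n)"
  shows "N * det A powr ((N - 1) / N) *
           (det B1 powr (1 / N) + det B2 powr (1 / N) - 2 * det A powr (1 / N))
         \<le> (\<Sum>i\<in>UNIV. \<Sum>j\<in>UNIV. cofactor A i j * (B1$i$j + B2$i$j - 2 * A$i$j))"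
proof -
  define S where "S X = (\<Sum>i\<in>UNIV. \<Sum>j\<in>UNIV. cofactor A i j * X$i$j)" for X :: "real^'n^'n"
  have "(\<chi> k. if k = i then A$i else A$k) = A" for i
    by (simp add: vec_eq_iff)
  then have "(\<Sum>j\<in>UNIV. cofactor A i j * A$i$j) = det A" for i
    by (simp add: cofactor_row_expansion)
  then have "S A = N * det A"
    by (simp add: S_def N_def)
  also have "\<dots> = N * (det A powr ((N - 1) / N) * det A powr (1 / N))"
    using positive_definite_det_pos[OF A] by (simp add: N_def powr_add[symmetric] add_divide_distrib[symmetric])
  finally have SA: "S A = N * det A powr ((N - 1) / N) * det A powr (1 / N)"
    by (simp add: mult.assoc)
  have "(\<Sum>i\<in>UNIV. \<Sum>j\<in>UNIV. cofactor A i j * (B1$i$j + B2$i$j - 2 * A$i$j)) = S B1 + S B2 - 2 * S A"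
    by (simp add: S_def algebra_simps sum.distrib sum_subtractf sum_distrib_left)
  moreover have "N * det A powr ((N - 1) / N) * det B1 powr (1 / N) \<le> S B1"
    and "N * det A powr ((N - 1) / N) * det B2 powr (1 / N) \<le> S B2"
    unfolding S_def N_def by (intro cofactor_pairing_ge A B1 B2)+
  ultimately show ?thesis
    by (simp add: SA algebra_simps)
qed


section \<open>Second derivatives\<close>

definition has_hessian ::
    "(real^'n::finite \<Rightarrow> real) \<Rightarrow> (real^'n \<Rightarrow> real^'n) \<Rightarrow> (real^'n \<Rightarrow> real^'n^'n) \<Rightarrow> bool" where
  "has_hessian g G H \<longleftrightarrow>
     (\<forall>x. (g has_derivative (\<lambda>h. G x \<bullet> h)) (at x)) \<and> (\<forall>x. (G has_derivative (\<lambda>h. H x *v h)) (at x))"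

lemma has_hessianD:
  assumes "has_hessian g G H"
  shows "(g has_derivative (\<lambda>h. G x \<bullet> h)) (at x)" and "(G has_derivative (\<lambda>h. H x *v h)) (at x)"
  using assms by (auto simp: has_hessian_def)

lemma C2_has_hessian: "C2 g \<Longrightarrow> \<exists>G H. has_hessian g G H"
  by (auto simp: C2_def has_hessian_def)

lemma has_real_derivative_along_line:
  assumes "(g has_derivative (\<lambda>h. D \<bullet> h)) (at (p + s *\<^sub>R a))"
  shows "((\<lambda>s. g (p + s *\<^sub>R a)) has_real_derivative D \<bullet> a) (at s)"
proof -
  have "((\<lambda>s. p + s *\<^sub>R a) has_derivative (\<lambda>s. s *\<^sub>R a)) (at s)"
    by (auto intro!: derivative_eq_intros)
  from has_derivative_compose[OF this assms]
  have "((\<lambda>s. g (p + s *\<^sub>R a)) has_derivative (\<lambda>s. D \<bullet> (s *\<^sub>R a))) (at s)" .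
  moreover have "(\<lambda>s. D \<bullet> (s *\<^sub>R a)) = (*) (D \<bullet> a)"
    by (simp add: fun_eq_iff mult.commute)
  ultimately show ?thesis by (simp add: has_field_derivative_def)
qed

lemma partial_eq_gradient:
  assumes "(g has_derivative (\<lambda>h. D \<bullet> h)) (at x)"
  shows "partial i g x = D $ i"
  using has_real_derivative_along_line[of g D x 0 "axis i 1"] assms
  by (simp add: partial_def DERIV_imp_deriv inner_axis)

lemma hess_eq_transpose:
  assumes "has_hessian g G H"
  shows "hess g x = transpose (H x)"
proof -
  have "partial j g = (\<lambda>y. G y $ j)" for j
    by (simp add: fun_eq_iff partial_eq_gradient[OF has_hessianD(1)[OF assms]])
  moreover have "((\<lambda>y. G y $ j) has_derivative (\<lambda>h. (H x *v h) $ j)) (at x)" for j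
    by (rule bounded_linear.has_derivative[OF bounded_linear_vec_nth has_hessianD(2)[OF assms]])
  moreover have "(\<lambda>h. (H x *v h) $ j) = (\<lambda>h. H x $ j \<bullet> h)" for j
    by (simp add: fun_eq_iff matrix_vector_mult_def inner_vec_def mult.commute)
  ultimately show ?thesis
    by (simp add: hess_def partial_eq_gradient vec_eq_iff transpose_def)
qed

lemma has_hessian_compose_linear:
  fixes M :: "real^'n^'n"
  assumes "has_hessian g G H"
  shows "has_hessian (\<lambda>y. g (M *v y)) (\<lambda>y. transpose M *v G (M *v y))
           (\<lambda>y. transpose M ** H (M *v y) ** M)"
proof -
  have M: "((\<lambda>y. M *v y) has_derivative (\<lambda>h. M *v h)) (at y)" for y
    by (simp add: matrix_vector_mul_bounded_linear bounded_linear_imp_has_derivative)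
  have "((\<lambda>y. g (M *v y)) has_derivative (\<lambda>h. G (M *v y) \<bullet> (M *v h))) (at y)" for y
    using has_derivative_compose[OF M has_hessianD(1)[OF assms]] .
  moreover have "((\<lambda>y. transpose M *v G (M *v y)) has_derivative
      (\<lambda>h. transpose M *v (H (M *v y) *v (M *v h)))) (at y)" for y
    using bounded_linear.has_derivative[OF matrix_vector_mul_bounded_linear
        has_derivative_compose[OF M has_hessianD(2)[OF assms]]] .
  ultimately show ?thesis
    by (simp add: has_hessian_def dot_lmul_matrix[symmetric] matrix_vector_mul_assoc matrix_mul_assoc)
qed

lemma has_derivative_translate:
  assumes "(f has_derivative f') (at (y + a))"
  shows "((\<lambda>y. f (y + a)) has_derivative f') (at y)"
  using has_derivative_compose[OF has_derivative_add[OF has_derivative_ident has_derivative_const] assms]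
  by simp

lemma has_hessian_incr:
  fixes s :: real and e :: "real^'n"
  assumes "has_hessian v G H"
  defines "c \<equiv> 1 / norm e powr (2 * s)"
  shows "has_hessian (incr s e v) (\<lambda>y. c *\<^sub>R (G (y + e) + G (y + - e) - 2 *\<^sub>R G y))
           (\<lambda>y. c *\<^sub>R (H (y + e) + H (y + - e) - 2 *\<^sub>R H y))"
proof -
  note D = has_derivative_translate[OF has_hessianD(1)[OF assms(1)]]
    and DD = has_derivative_translate[OF has_hessianD(2)[OF assms(1)]]
  have "incr s e v = (\<lambda>y. c * (v (y + e) + v (y + - e) - 2 * v y))"
    by (simp add: fun_eq_iff incr_def c_def)
  moreover have "((\<lambda>y. c * (v (y + e) + v (y + - e) - 2 * v y)) has_derivative
      (\<lambda>h. c * (G (y + e) \<bullet> h + G (y + - e) \<bullet> h - 2 * (G y \<bullet> h)))) (at y)" for y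
    by (intro has_derivative_mult_right has_derivative_add has_derivative_diff D
        has_derivative_mult_right[of v] has_hessianD(1)[OF assms(1)])
  moreover have "((\<lambda>y. c *\<^sub>R (G (y + e) + G (y + - e) - 2 *\<^sub>R G y)) has_derivative
      (\<lambda>h. (c *\<^sub>R (H (y + e) + H (y + - e) - 2 *\<^sub>R H y)) *v h)) (at y)" for y
  proof (rule has_derivative_eq_rhs)
    show "((\<lambda>y. c *\<^sub>R (G (y + e) + G (y + - e) - 2 *\<^sub>R G y)) has_derivative
      (\<lambda>h. c *\<^sub>R (H (y + e) *v h + H (y + - e) *v h - 2 *\<^sub>R (H y *v h)))) (at y)"
      by (intro has_derivative_scaleR_right has_derivative_add has_derivative_diff DD
          has_hessianD(2)[OF assms(1)])
  qed (simp add: fun_eq_iff scaleR_matrix_vector_assoc[symmetric] matrix_vector_mult_add_rdistrib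
      matrix_vector_mult_diff_rdistrib)
  ultimately show ?thesis
    by (simp add: has_hessian_def inner_diff_left inner_add_left)
qed

lemma second_difference_estimate:
  fixes g :: "real^'n \<Rightarrow> real"
  assumes g: "\<And>y. (g has_derivative (\<lambda>h. G y \<bullet> h)) (at y)"
    and G: "\<And>y. norm (y - x) \<le> r \<Longrightarrow> norm (G y - G x - H *v (y - x)) \<le> \<epsilon> * norm (y - x)"
    and \<epsilon>: "0 \<le> \<epsilon>" and t: "0 < t" "t * (norm a + norm b) \<le> r"
  shows "\<bar>g (x + t *\<^sub>R a + t *\<^sub>R b) - g (x + t *\<^sub>R a) - g (x + t *\<^sub>R b) + g x - t\<^sup>2 * ((H *v b) \<bullet> a)\<bar>
           \<le> 2 * \<epsilon> * (norm a + norm b) * norm a * t\<^sup>2"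
proof -
  define \<phi> where "\<phi> s = g (x + t *\<^sub>R b + s *\<^sub>R a) - g (x + s *\<^sub>R a)" for s
  define \<phi>' where "\<phi>' s = (G (x + t *\<^sub>R b + s *\<^sub>R a) - G (x + s *\<^sub>R a)) \<bullet> a" for s
  define \<rho> where "\<rho> y = G y - G x - H *v (y - x)" for y
  have "(\<phi> has_real_derivative \<phi>' s) (at s)" for s
    unfolding \<phi>_def \<phi>'_def inner_diff_left by (intro DERIV_diff has_real_derivative_along_line g)
  then obtain z where z: "0 < z" "z < t" and mvt: "\<phi> t - \<phi> 0 = (t - 0) * \<phi>' z"
    using MVT2[of 0 t \<phi> \<phi>'] t by auto
  define y1 where "y1 = x + t *\<^sub>R b + z *\<^sub>R a"
  define y2 where "y2 = x + z *\<^sub>R a"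
  have za: "z * norm a \<le> t * norm a" and tb: "0 \<le> t * norm b"
    using z t by (simp_all add: mult_right_mono)
  have "norm (y1 - x) \<le> t * norm b + z * norm a"
    using norm_triangle_ineq[of "t *\<^sub>R b" "z *\<^sub>R a"] z t by (simp add: y1_def)
  moreover have "norm (y2 - x) = z * norm a"
    using z by (simp add: y2_def)
  ultimately have n1: "norm (y1 - x) \<le> t * (norm a + norm b)"
    and n2: "norm (y2 - x) \<le> t * (norm a + norm b)"
    using za tb by (simp_all add: distrib_left)
  have \<rho>_bound: "norm (\<rho> y) \<le> \<epsilon> * (t * (norm a + norm b))"
    if "norm (y - x) \<le> t * (norm a + norm b)" for y
  proof -
    have "norm (\<rho> y) \<le> \<epsilon> * norm (y - x)"
      unfolding \<rho>_def using that t(2) by (intro G) linarith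
    also have "\<dots> \<le> \<epsilon> * (t * (norm a + norm b))"
      using that \<epsilon> by (rule mult_left_mono)
    finally show ?thesis .
  qed
  have \<rho>12: "norm (\<rho> y1) + norm (\<rho> y2) \<le> 2 * \<epsilon> * (t * (norm a + norm b))"
    using \<rho>_bound[OF n1] \<rho>_bound[OF n2] by linarith
  have "\<phi>' z - t * ((H *v b) \<bullet> a) = (\<rho> y1 - \<rho> y2) \<bullet> a"
    by (simp add: \<phi>'_def \<rho>_def y1_def y2_def inner_diff_left matrix_vector_mult_diff_distrib
        matrix_vector_right_distrib matrix_vector_mult_scaleR algebra_simps)
  then have "\<bar>\<phi>' z - t * ((H *v b) \<bullet> a)\<bar> \<le> norm (\<rho> y1 - \<rho> y2) * norm a"
    by (simp add: Cauchy_Schwarz_ineq2)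
  also have "\<dots> \<le> (norm (\<rho> y1) + norm (\<rho> y2)) * norm a"
    by (intro mult_right_mono norm_triangle_ineq4 norm_ge_zero)
  also have "\<dots> \<le> 2 * \<epsilon> * (t * (norm a + norm b)) * norm a"
    by (intro mult_right_mono \<rho>12 norm_ge_zero)
  finally have "\<bar>\<phi>' z - t * ((H *v b) \<bullet> a)\<bar> \<le> 2 * \<epsilon> * (t * (norm a + norm b)) * norm a" .
  moreover have "g (x + t *\<^sub>R a + t *\<^sub>R b) - g (x + t *\<^sub>R a) - g (x + t *\<^sub>R b) + g x - t\<^sup>2 * ((H *v b) \<bullet> a)
      = t * (\<phi>' z - t * ((H *v b) \<bullet> a))"
    using mvt by (simp add: \<phi>_def algebra_simps power2_eq_square)
  ultimately show ?thesis
    using t by (simp add: abs_mult power2_eq_square mult_left_mono mult_ac)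
qed

lemma second_difference_tendsto:
  fixes g :: "real^'n \<Rightarrow> real"
  assumes g: "\<And>y. (g has_derivative (\<lambda>h. G y \<bullet> h)) (at y)"
    and G: "(G has_derivative (\<lambda>h. H *v h)) (at x)"
  shows "((\<lambda>t. (g (x + t *\<^sub>R a + t *\<^sub>R b) - g (x + t *\<^sub>R a) - g (x + t *\<^sub>R b) + g x) / t\<^sup>2)
           \<longlongrightarrow> (H *v b) \<bullet> a) (at_right 0)"
proof (rule tendstoI)
  fix \<epsilon> :: real assume "0 < \<epsilon>"
  define K where "K = 2 * (norm a + norm b) * norm a + 1"
  have K: "0 < K"
    unfolding K_def by (intro add_nonneg_pos) simp_all
  have small: "2 * (\<epsilon> / K) * (norm a + norm b) * norm a < \<epsilon>"
    using K \<open>0 < \<epsilon>\<close> by (simp add: K_def field_simps)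
  obtain d where "0 < d"
    and d: "\<And>y. norm (y - x) < d \<Longrightarrow> norm (G y - G x - H *v (y - x)) \<le> \<epsilon> / K * norm (y - x)"
    using G \<open>0 < \<epsilon>\<close> K unfolding has_derivative_at_alt by (meson divide_pos_pos)
  have "dist ((g (x + t *\<^sub>R a + t *\<^sub>R b) - g (x + t *\<^sub>R a) - g (x + t *\<^sub>R b) + g x) / t\<^sup>2)
          ((H *v b) \<bullet> a) < \<epsilon>"
    if t: "0 < t" "t < d / 2 / (norm a + norm b + 1)" for t
  proof -
    have "t * (norm a + norm b) \<le> t * (norm a + norm b + 1)"
      using t by simp
    also have "\<dots> \<le> d / 2"
      using t by (simp add: field_simps add_pos_nonneg)
    finally have td: "t * (norm a + norm b) \<le> d / 2" .
    have "\<bar>g (x + t *\<^sub>R a + t *\<^sub>R b) - g (x + t *\<^sub>R a) - g (x + t *\<^sub>R b) + g x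
        - t\<^sup>2 * ((H *v b) \<bullet> a)\<bar> \<le> 2 * (\<epsilon> / K) * (norm a + norm b) * norm a * t\<^sup>2"
    proof (rule second_difference_estimate[where r = "d / 2", OF g])
      show "norm (G y - G x - H *v (y - x)) \<le> \<epsilon> / K * norm (y - x)" if "norm (y - x) \<le> d / 2" for y
        using that \<open>0 < d\<close> by (intro d) linarith
    qed (use t td \<open>0 < \<epsilon>\<close> K in auto)
    also have "\<dots> < \<epsilon> * t\<^sup>2"
      using mult_strict_right_mono[OF small, of "t\<^sup>2"] t by simp
    finally show ?thesis
      using t by (simp add: dist_real_def field_simps)
  qed
  moreover have "0 < d / 2 / (norm a + norm b + 1)"
    using \<open>0 < d\<close> by (intro divide_pos_pos add_nonneg_pos) simp_all
  ultimately show "\<forall>\<^sub>F t in at_right 0.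
      dist ((g (x + t *\<^sub>R a + t *\<^sub>R b) - g (x + t *\<^sub>R a) - g (x + t *\<^sub>R b) + g x) / t\<^sup>2)
        ((H *v b) \<bullet> a) < \<epsilon>"
    unfolding eventually_at_right_field by blast
qed

lemma has_hessian_symmetric:
  assumes "has_hessian g G H"
  shows "transpose (H x) = H x"
proof -
  have "(H x *v b) \<bullet> a = (H x *v a) \<bullet> b" for a b
    \<comment> \<open>the mixed second difference quotient is symmetric in a and b\<close>
  proof (rule tendsto_unique[OF trivial_limit_at_right_real])
    show "((\<lambda>t. (g (x + t *\<^sub>R a + t *\<^sub>R b) - g (x + t *\<^sub>R a) - g (x + t *\<^sub>R b) + g x) / t\<^sup>2)
           \<longlongrightarrow> (H x *v b) \<bullet> a) (at_right 0)"
      using second_difference_tendsto has_hessianD[OF assms] by blast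
    show "((\<lambda>t. (g (x + t *\<^sub>R a + t *\<^sub>R b) - g (x + t *\<^sub>R a) - g (x + t *\<^sub>R b) + g x) / t\<^sup>2)
           \<longlongrightarrow> (H x *v a) \<bullet> b) (at_right 0)"
      using second_difference_tendsto[OF has_hessianD[OF assms], where a = b and b = a]
      by (simp add: algebra_simps)
  qed
  from this[of "axis j 1" "axis i 1" for i j] show ?thesis
    by (simp add: vec_eq_iff transpose_def inner_axis_matrix_axis inner_commute)
qed

lemma has_hessian_hess: "has_hessian g G H \<Longrightarrow> hess g x = H x"
  using hess_eq_transpose has_hessian_symmetric by metis

lemma hess_incr:
  assumes "has_hessian v G H"
  shows "hess (incr s e v) x
           = (1 / norm e powr (2 * s)) *\<^sub>R (hess v (x + e) + hess v (x - e) - 2 *\<^sub>R hess v x)"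
  using has_hessian_hess[OF has_hessian_incr[OF assms]] has_hessian_hess[OF assms] by simp

lemma cofactor_incr_ge:
  fixes v :: "real^'n \<Rightarrow> real"
  assumes v: "has_hessian v G H" and pd: "\<And>y. positive_definite (hess v y)"
  defines "N \<equiv> real CARD('n)"
  shows "N * det (hess v x) powr ((N - 1) / N) *
           ((det (hess v (x + e)) powr (1 / N) + det (hess v (x - e)) powr (1 / N)
             - 2 * det (hess v x) powr (1 / N)) / norm e powr (2 * s))
         \<le> (\<Sum>i\<in>UNIV. \<Sum>j\<in>UNIV. cofactor (hess v x) i j * partial i (partial j (incr s e v)) x)"
proof -
  have "partial i (partial j (incr s e v)) x = hess (incr s e v) x $ i $ j" for i j
    by (simp add: hess_def)
  then have "(\<Sum>i\<in>UNIV. \<Sum>j\<in>UNIV. cofactor (hess v x) i j * partial i (partial j (incr s e v)) x)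
      = (\<Sum>i\<in>UNIV. \<Sum>j\<in>UNIV. cofactor (hess v x) i j *
          (hess v (x + e) $ i $ j + hess v (x - e) $ i $ j - 2 * hess v x $ i $ j)) / norm e powr (2 * s)"
    by (simp add: hess_incr[OF v] sum_divide_distrib)
  moreover have "N * det (hess v x) powr ((N - 1) / N) *
      (det (hess v (x + e)) powr (1 / N) + det (hess v (x - e)) powr (1 / N) - 2 * det (hess v x) powr (1 / N))
      \<le> (\<Sum>i\<in>UNIV. \<Sum>j\<in>UNIV. cofactor (hess v x) i j *
          (hess v (x + e) $ i $ j + hess v (x - e) $ i $ j - 2 * hess v x $ i $ j))"
    unfolding N_def by (rule cofactor_second_difference_ge[OF pd pd pd])
  ultimately show ?thesis
    using divide_right_mono[of _ _ "norm e powr (2 * s)"] by (simp only: times_divide_eq_right) simp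
qed

theorem lemma3p1:
  fixes \<alpha> d0 c0 \<theta> c1 c2 s :: real
    and fp f u :: "real^'n::finite \<Rightarrow> real"
    and M :: "real^'n^'n"
    and e :: "real^'n"
  assumes alpha: "0 < \<alpha>" "\<alpha> < 1"
    and fp_bounds: "\<And>x. 1 / d0 \<le> fp x" "\<And>x. fp x \<le> d0"
    and fp_holder: "\<And>x y. \<bar>fp x - fp y\<bar> \<le> d0 * dist x y powr \<alpha>"
    and fp_periodic: "\<And>x i. fp (x + axis i 1) = fp x"
    and f_holder: "\<exists>C. \<forall>x y. \<bar>f x - f y\<bar> \<le> C * dist x y powr \<alpha>"
    and f_decay: "((\<lambda>x. f x - fp x) \<longlongrightarrow> 0) at_infinity"
    and u_convex: "convex_on UNIV u"
    and u_C2: "C2 u"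
    and u_eq: "\<And>x. det (hess u x) = f x"
    and detM: "det M = 1"
    and u_asym: "\<And>x. norm x \<ge> 1 \<Longrightarrow>
                   \<bar>u (M *v x) - (1/2) * norm x ^ 2\<bar> \<le> c0 * norm x powr (2 - \<theta>)"
    and c12: "0 < c1" "0 < c2"
    and hess_bounds: "\<And>x \<xi>. c1 * norm \<xi> ^ 2 \<le> \<xi> \<bullet> (hess (\<lambda>y. u (M *v y)) x *v \<xi>)"
                     "\<And>x \<xi>. \<xi> \<bullet> (hess (\<lambda>y. u (M *v y)) x *v \<xi>) \<le> c2 * norm \<xi> ^ 2"
    and s: "0 < s" "s < \<alpha> / 2"
    and e: "e \<in> {\<Sum>i\<in>UNIV. of_int (k i) *\<^sub>R (matrix_inv M *v axis i 1) | k. True}" "e \<noteq> 0"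
  shows "\<forall>x. (let v = (\<lambda>y. u (M *v y)); fT = (\<lambda>y. f (M *v y)); m = real CARD('n) in
          (\<Sum>i\<in>UNIV. \<Sum>j\<in>UNIV. cofactor (hess v x) i j * partial i (partial j (incr s e v)) x)
          \<ge> m * (det (hess v x) powr ((m - 1) / m)) *
             ((fT (x + e) powr (1/m) + fT (x - e) powr (1/m) - 2 * fT x powr (1/m))
               / norm e powr (2 * s)))"
proof -
  define v where "v = (\<lambda>y. u (M *v y))"
  obtain G H where u: "has_hessian u G H"
    using C2_has_hessian[OF u_C2] by blast
  have v: "has_hessian v (\<lambda>y. transpose M *v G (M *v y)) (\<lambda>y. transpose M ** H (M *v y) ** M)"
    unfolding v_def by (rule has_hessian_compose_linear[OF u])
  have pd: "positive_definite (hess v y)" for y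
  proof -
    have "0 < \<xi> \<bullet> (hess v y *v \<xi>)" if "\<xi> \<noteq> 0" for \<xi>
    proof -
      have "0 < c1 * norm \<xi> ^ 2" using c12(1) that by simp
      also have "\<dots> \<le> \<xi> \<bullet> (hess v y *v \<xi>)" unfolding v_def by (rule hess_bounds(1))
      finally show ?thesis .
    qed
    then show ?thesis
      using has_hessian_hess[OF v] has_hessian_symmetric[OF v] by (simp add: positive_definite_def)
  qed
  have det: "det (hess v y) = f (M *v y)" for y
    using u_eq[of "M *v y"] detM
    by (simp add: has_hessian_hess[OF v] has_hessian_hess[OF u] det_mul det_transpose)
  show ?thesis
    unfolding Let_def v_def[symmetric] det[symmetric] using cofactor_incr_ge[OF v pd] by blast
qed

end
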